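(* Let $\mathcal S$ be a critical poset, with $a$, $\mathcal S_a$, $\mathcal V_\lambda(\mathcal S)=(V^{\mathcal S};V^{\mathcal S}_i)_{i\in\mathcal S}$ and $\mathcal V(\mathcal S_a)=(V^{\mathcal S};V^{\mathcal S}_i)_{i\in\mathcal S_a}$ as in the context, and write $V^{\mathcal S}_\lambda$ for the subspace at $a$. Let $\chi^a=(\chi^a_i)_{i\in\mathcal S_a}\in\mathbb R_+^{|\mathcal S_a|}$ be a weight such that $\mathcal V(\mathcal S_a)$ is $\chi^a$-stable, let $R=\min\{\dim M-\sum_{i\in\mathcal S_a}\chi^a_i\dim(V^{\mathcal S}_i\cap M): M \text{ a proper subspace of } V^{\mathcal S}\}$, let $0<\varepsilon<R$, $T=1+(R-\varepsilon)\dim V^{\mathcal S}_\lambda/\dim V^{\mathcal S}$, and define $\chi^{\mathcal S}_i=\chi^a_iT^{-1}$ for $i\in\mathcal S_a$ and $\chi^{\mathcal S}_a=(R-\varepsilon)T^{-1}$. Then $\mathcal V_\lambda(\mathcal S)$ is $\chi^{\mathcal S}$-stable for every $\lambda\in\mathbb C$.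
   Context: The critical posets are $(1,1,1,1),(2,2,2),(1,3,3),(1,2,5),(N,4)$, where $(t_1,\dots,t_s)$ is the disjoint union of incomparable chains of sizes $t_i$, $N$ has elements $a_1,a_2,b_1,b_2$ with exactly $a_1\prec b_1,a_2\prec b_1,a_2\prec b_2$, and $(N,4)$ is the disjoint union of $N$ and a 4-chain. A subspace representation $(V;V_i)_{i\in\mathcal P}$ of a poset $\mathcal P$ consists of a finite-dimensional complex space $V$ and subspaces with $V_i\subseteq V_j$ when $i\prec j$. For $\chi\in\mathbb R_+^{|\mathcal P|}$ it is $\chi$-stable if $\sum_i\chi_i\dim V_i=\dim V$ and $\sum_i\chi_i\dim(V_i\cap M)<\dim M$ for every subspace $0\neq M\subsetneq V$. With $e_i$ standard basis vectors, $e_{i_1\dots i_k}=e_{i_1}+\dots+e_{i_k}$, $\langle\cdots\rangle$ span, define $\mathcal V_\lambda(\mathcal S)$, $\lambda\in\mathbb C$ (chains bottom to top): $(1,1,1,1)$: $\mathbb C^2$; $\langle e_1\rangle,\langle e_2\rangle,\langle e_1+e_2\rangle,\langle e_1+\lambda e_2\rangle$. $(2,2,2)$: $\mathbb C^3$; $\langle e_{123}\rangle\subset\langle e_{123},e_1+\lambda e_3\rangle$; $\langle e_1\rangle\subset\langle e_1,e_2\rangle$; $\langle e_3\rangle\subset\langle e_2,e_3\rangle$. $(1,3,3)$: $\mathbb C^4$; $\langle e_{123},e_{24}\rangle$; $\langle e_4\rangle\subset\langle e_1,e_4\rangle\subset\langle e_1,e_4,e_2+\lambda e_3\rangle$; $\langle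 e_3\rangle\subset\langle e_2,e_3\rangle\subset\langle e_1,e_2,e_3\rangle$. $(1,2,5)$: $\mathbb C^6$; $\langle e_{123},e_{245},e_{16}\rangle$; $\langle e_5,e_6\rangle\subset\langle e_1,e_2,e_5,e_6\rangle$; $\langle e_4\rangle\subset\langle e_3,e_4\rangle\subset\langle e_2,e_3,e_4\rangle\subset\langle e_1,e_2,e_3,e_4\rangle\subset\langle e_1,e_2,e_3,e_4,e_5+\lambda e_6\rangle$. $(N,4)$: $\mathbb C^5$; 4-chain $\langle e_4\rangle\subset\langle e_3,e_4\rangle\subset\langle e_2,e_3,e_4\rangle\subset\langle e_1,e_2,e_3,e_4\rangle$; $a_1\mapsto\langle e_{235},e_{134}\rangle$, $a_2\mapsto\langle e_5\rangle$, $b_1\mapsto\langle e_{235},e_{134},e_5,e_3+\lambda e_4\rangle$, $b_2\mapsto\langle e_1,e_2,e_5\rangle$. $a\in\mathcal S$ is the unique element whose subspace depends on $\lambda$; $\mathcal S_a=\mathcal S\setminus\{a\}$; $\mathcal V(\mathcal S_a)$ is $\mathcal V_\lambda(\mathcal S)$ with the subspace at $a$ deleted. *)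

theory Defs
  imports Complex_Main "HOL-Library.Function_Algebras"
begin

text \<open>Vectors are functions nat => complex; the space C^n is the span of
  the standard basis vectors e_1, ..., e_n (coordinates 1..n).\<close>

definition cscale :: "complex \<Rightarrow> (nat \<Rightarrow> complex) \<Rightarrow> (nat \<Rightarrow> complex)" where
  "cscale c v = (\<lambda>j. c * v j)"

abbreviation cspan :: "(nat \<Rightarrow> complex) set \<Rightarrow> (nat \<Rightarrow> complex) set" where
  "cspan \<equiv> module.span cscale"

abbreviation csubspace :: "(nat \<Rightarrow> complex) set \<Rightarrow> bool" where
  "csubspace \<equiv> module.subspace cscale"

abbreviation cdim :: "(nat \<Rightarrow> complex) set \<Rightarrow> nat" where
  "cdim \<equiv> vector_space.dim cscale"

definition cv :: "complex list \<Rightarrow> nat \<Rightarrow> complex" where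
  "cv cs = (\<lambda>j. if 1 \<le> j \<and> j \<le> length cs then cs ! (j - 1) else 0)"

definition ev :: "nat \<Rightarrow> nat \<Rightarrow> complex" where
  "ev i = (\<lambda>j. if j = i then 1 else 0)"

definition Cn :: "nat \<Rightarrow> (nat \<Rightarrow> complex) set" where
  "Cn n = cspan {ev j | j. 1 \<le> j \<and> j \<le> n}"

definition chi_stable ::
  "(nat \<Rightarrow> complex) set \<Rightarrow> nat set \<Rightarrow> (nat \<Rightarrow> (nat \<Rightarrow> complex) set) \<Rightarrow> (nat \<Rightarrow> real) \<Rightarrow> bool" where
  "chi_stable V I W \<chi> \<longleftrightarrow>
     (\<Sum>i\<in>I. \<chi> i * real (cdim (W i))) = real (cdim V) \<and>
     (\<forall>M. csubspace M \<and> M \<subseteq> V \<and> M \<noteq> {0} \<and> M \<noteq> V \<longrightarrow>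
        (\<Sum>i\<in>I. \<chi> i * real (cdim (W i \<inter> M))) < real (cdim M))"

text \<open>Elements of each poset are numbered 0..card-1
  (order listed below); the element a is the one carrying the lambda-subspace.
  (1,1,1,1): 0,1,2,3 the four one-element chains; a = 3.
  (2,2,2):   chain 0<1, chain 2<3, chain 4<5; a = 1.
  (1,3,3):   chain 0; chain 1<2<3; chain 4<5<6; a = 3.
  (1,2,5):   chain 0; chain 1<2; chain 3<4<5<6<7; a = 7.
  (N,4):     chain 0<1<2<3; N: 4 = a1, 5 = a2, 6 = b1, 7 = b2
             with 4<6, 5<6, 5<7; a = 6.\<close>
datatype crit = P1111 | P222 | P133 | P125 | PN4

fun crit_le :: "crit \<Rightarrow> nat \<Rightarrow> nat \<Rightarrow> bool" where
  "crit_le P1111 i j = (i = j)"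
| "crit_le P222 i j = (i = j \<or> (i,j) \<in> {(0,1),(2,3),(4,5)})"
| "crit_le P133 i j = (i = j \<or> (i,j) \<in> {(1,2),(2,3),(1,3),(4,5),(5,6),(4,6)})"
| "crit_le P125 i j = (i = j \<or> (i,j) \<in> {(1,2)} \<or> (3 \<le> i \<and> i < j \<and> j \<le> 7))"
| "crit_le PN4 i j = (i = j \<or> (i < j \<and> j \<le> 3) \<or> (i,j) \<in> {(4,6),(5,6),(5,7)})"

fun crit_card :: "crit \<Rightarrow> nat" where
  "crit_card P1111 = 4" | "crit_card P222 = 6" | "crit_card P133 = 7"
| "crit_card P125 = 8" | "crit_card PN4 = 8"

definition elems :: "crit \<Rightarrow> nat set" where
  "elems S = {..<crit_card S}"

fun elt_a :: "crit \<Rightarrow> nat" where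
  "elt_a P1111 = 3" | "elt_a P222 = 1" | "elt_a P133 = 3"
| "elt_a P125 = 7" | "elt_a PN4 = 6"

definition elems_a :: "crit \<Rightarrow> nat set" where
  "elems_a S = elems S - {elt_a S}"

fun ambdim :: "crit \<Rightarrow> nat" where
  "ambdim P1111 = 2" | "ambdim P222 = 3" | "ambdim P133 = 4"
| "ambdim P125 = 6" | "ambdim PN4 = 5"

definition Vamb :: "crit \<Rightarrow> (nat \<Rightarrow> complex) set" where
  "Vamb S = Cn (ambdim S)"

fun Vfix :: "crit \<Rightarrow> nat \<Rightarrow> (nat \<Rightarrow> complex) set" where
  "Vfix P1111 i =
     (if i = 0 then cspan {cv [1,0]}
      else if i = 1 then cspan {cv [0,1]}
      else if i = 2 then cspan {cv [1,1]}
      else {0})"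
| "Vfix P222 i =
     (if i = 0 then cspan {cv [1,1,1]}
      else if i = 2 then cspan {cv [1,0,0]}
      else if i = 3 then cspan {cv [1,0,0], cv [0,1,0]}
      else if i = 4 then cspan {cv [0,0,1]}
      else if i = 5 then cspan {cv [0,1,0], cv [0,0,1]}
      else {0})"
| "Vfix P133 i =
     (if i = 0 then cspan {cv [1,1,1,0], cv [0,1,0,1]}
      else if i = 1 then cspan {cv [0,0,0,1]}
      else if i = 2 then cspan {cv [1,0,0,0], cv [0,0,0,1]}
      else if i = 4 then cspan {cv [0,0,1,0]}
      else if i = 5 then cspan {cv [0,1,0,0], cv [0,0,1,0]}
      else if i = 6 then cspan {cv [1,0,0,0], cv [0,1,0,0], cv [0,0,1,0]}
      else {0})"
| "Vfix P125 i =
     (if i = 0 then cspan {cv [1,1,1,0,0,0], cv [0,1,0,1,1,0], cv [1,0,0,0,0,1]}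
      else if i = 1 then cspan {ev 5, ev 6}
      else if i = 2 then cspan {ev 1, ev 2, ev 5, ev 6}
      else if i = 3 then cspan {ev 4}
      else if i = 4 then cspan {ev 3, ev 4}
      else if i = 5 then cspan {ev 2, ev 3, ev 4}
      else if i = 6 then cspan {ev 1, ev 2, ev 3, ev 4}
      else {0})"
| "Vfix PN4 i =
     (if i = 0 then cspan {ev 4}
      else if i = 1 then cspan {ev 3, ev 4}
      else if i = 2 then cspan {ev 2, ev 3, ev 4}
      else if i = 3 then cspan {ev 1, ev 2, ev 3, ev 4}
      else if i = 4 then cspan {cv [0,1,1,0,1], cv [1,0,1,1,0]}
      else if i = 5 then cspan {ev 5}
      else if i = 7 then cspan {ev 1, ev 2, ev 5}
      else {0})"

fun Vlam :: "crit \<Rightarrow> complex \<Rightarrow> (nat \<Rightarrow> complex) set" where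
  "Vlam P1111 l = cspan {cv [1, l]}"
| "Vlam P222 l = cspan {cv [1,1,1], cv [1,0,l]}"
| "Vlam P133 l = cspan {cv [1,0,0,0], cv [0,0,0,1], cv [0,1,l,0]}"
| "Vlam P125 l = cspan {ev 1, ev 2, ev 3, ev 4, cv [0,0,0,0,1,l]}"
| "Vlam PN4 l = cspan {cv [0,1,1,0,1], cv [1,0,1,1,0], ev 5, cv [0,0,1,l,0]}"

definition Vrep :: "crit \<Rightarrow> complex \<Rightarrow> nat \<Rightarrow> (nat \<Rightarrow> complex) set" where
  "Vrep S l i = (if i = elt_a S then Vlam S l else Vfix S i)"

definition Rmin :: "crit \<Rightarrow> (nat \<Rightarrow> real) \<Rightarrow> real" where
  "Rmin S \<chi>a = Min {real (cdim M) - (\<Sum>i\<in>elems_a S. \<chi>a i * real (cdim (Vfix S i \<inter> M))) | M.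
      csubspace M \<and> M \<subseteq> Vamb S \<and> M \<noteq> {0} \<and> M \<noteq> Vamb S}"

end

theory Submission
  imports Defs "HOL-Library.FuncSet"
begin

(* Let n = dim V, d = dim V_lambda and c = R - eps, so T = 1 + c d / n.  The weights of the
   new representation sum to (c d + n) / T = n.  For a proper subspace M of dimension m the old
   weights contribute at most m - R < m - c, and V_lambda contributes c dim (V_lambda \<inter> M) \<le> c m,
   so it suffices that c m - c \<le> c d m / n, i.e. m (n - d) \<le> n.  This holds because m \<le> n and,
   for every critical poset, V_lambda has codimension at most 1, which is checked by exhibiting
   spanning vectors in echelon form. *)

interpretation cvs: vector_space cscale
  by unfold_locales (auto simp: cscale_def fun_eq_iff algebra_simps)

lemma cscale_sum_apply: "(\<Sum>x\<in>A. cscale (f x) x) k = (\<Sum>x\<in>A. f x * x k)"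
  by (induction A rule: infinite_finite_induct) (auto simp: cscale_def)

(* The space nat \<Rightarrow> complex is infinite-dimensional, so the library's dim_mono does not apply. *)
lemma cdim_mono:
  assumes "A \<subseteq> B" "B \<subseteq> cspan W" "finite W"
  shows "cdim A \<le> cdim B"
proof -
  obtain BB where BB: "BB \<subseteq> B" "cvs.independent BB" "B \<subseteq> cspan BB" "card BB = cdim B"
    by (rule cvs.basis_exists)
  have "finite BB"
    using cvs.independent_span_bound[of W BB] BB assms by auto
  then show ?thesis
    using cvs.dim_le_card[of A BB] BB assms by auto
qed

lemma cdim_cspan_triangular:
  fixes xs :: "(nat \<Rightarrow> complex) list" and p :: "nat \<Rightarrow> nat"
  assumes pivot: "\<forall>j<length xs. (xs ! j) (p j) \<noteq> 0"
    and triangular: "\<forall>j<length xs. \<forall>i<j. (xs ! j) (p i) = 0"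
  shows "cdim (cspan (set xs)) = length xs"
proof -
  have coeffs_zero: "g j = 0"
    if comb: "\<And>k. (\<Sum>t<length xs. g t * (xs ! t) k) = 0" and "j < length xs" for g j
    using \<open>j < length xs\<close>
  proof (induction j rule: less_induct)
    case (less j)
    have single_term: "g t * (xs ! t) (p j) = (if t = j then g j * (xs ! j) (p j) else 0)"
      if "t \<in> {..<length xs}" for t
      using less.IH triangular that less.prems by (cases t j rule: linorder_cases) auto
    have "(\<Sum>t<length xs. g t * (xs ! t) (p j)) = (\<Sum>t<length xs. if t = j then g j * (xs ! j) (p j) else 0)"
      by (rule sum.cong[OF refl single_term])
    also have "\<dots> = g j * (xs ! j) (p j)"
      using less.prems by simp
    finally have "(\<Sum>t<length xs. g t * (xs ! t) (p j)) = g j * (xs ! j) (p j)" .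
    then show ?case using comb[of "p j"] pivot less.prems by simp
  qed
  have "xs ! i \<noteq> xs ! j" if "i < j" "j < length xs" for i j
  proof -
    have "(xs ! i) (p i) \<noteq> 0" using pivot that by simp
    moreover have "(xs ! j) (p i) = 0" using triangular that by simp
    ultimately show ?thesis by metis
  qed
  then have "distinct xs"
    by (metis distinct_conv_nth nat_neq_iff)
  moreover have "cvs.independent (set xs)"
  proof (rule cvs.independent_if_scalars_zero)
    fix f x assume comb: "(\<Sum>x\<in>set xs. cscale (f x) x) = 0" and "x \<in> set xs"
    then obtain j where j: "j < length xs" "x = xs ! j" by (auto simp: in_set_conv_nth)
    have "(\<Sum>t<length xs. f (xs ! t) * (xs ! t) k) = 0" for k
    proof -
      have "(\<Sum>t<length xs. f (xs ! t) * (xs ! t) k) = (\<Sum>y\<in>set xs. f y * y k)"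
        using bij_betw_nth[OF \<open>distinct xs\<close> refl refl] by (rule sum.reindex_bij_betw)
      also have "\<dots> = 0" using comb cscale_sum_apply[of f "set xs" k] by simp
      finally show ?thesis .
    qed
    then show "f x = 0" using coeffs_zero[of "\<lambda>t. f (xs ! t)"] j by simp
  qed simp
  ultimately show ?thesis
    using cvs.dim_span_eq_card_independent distinct_card by metis
qed

lemma chi_stable_adjoin:
  fixes V U :: "(nat \<Rightarrow> complex) set" and W :: "nat \<Rightarrow> (nat \<Rightarrow> complex) set"
    and \<chi> :: "nat \<Rightarrow> real" and c :: real
  assumes "finite I" "a \<notin> I"
    and V: "V \<subseteq> cspan B" "finite B" "0 < cdim V"
    and codim: "cdim V \<le> cdim U + 1"
    and "0 \<le> c"
    and total: "(\<Sum>i\<in>I. \<chi> i * real (cdim (W i))) = real (cdim V)"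
    and slack: "\<And>M. csubspace M \<Longrightarrow> M \<subseteq> V \<Longrightarrow> M \<noteq> {0} \<Longrightarrow> M \<noteq> V \<Longrightarrow>
      c + (\<Sum>i\<in>I. \<chi> i * real (cdim (W i \<inter> M))) < real (cdim M)"
  defines "T \<equiv> 1 + c * real (cdim U) / real (cdim V)"
  shows "chi_stable V (insert a I) (W(a := U)) (\<lambda>i. if i = a then c / T else \<chi> i / T)"
proof -
  define n where "n = real (cdim V)"
  define d where "d = real (cdim U)"
  have "n > 0" "d \<ge> 0" "d \<ge> n - 1" using V(3) codim unfolding n_def d_def by linarith+
  then have "T > 0" unfolding T_def n_def[symmetric] d_def[symmetric]
    using \<open>0 \<le> c\<close> by (simp add: add_pos_nonneg)
  have weighted_sum: "(\<Sum>i\<in>insert a I. (if i = a then c / T else \<chi> i / T) * real (cdim (G ((W(a := U)) i)))) =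
      (c * real (cdim (G U)) + (\<Sum>i\<in>I. \<chi> i * real (cdim (G (W i))))) / T" for G
  proof -
    have "(\<Sum>i\<in>I. (if i = a then c / T else \<chi> i / T) * real (cdim (G ((W(a := U)) i)))) =
        (\<Sum>i\<in>I. \<chi> i * real (cdim (G (W i)))) / T"
      unfolding sum_divide_distrib using \<open>a \<notin> I\<close> by (intro sum.cong) auto
    then show ?thesis using \<open>finite I\<close> \<open>a \<notin> I\<close> by (simp add: add_divide_distrib)
  qed
  show ?thesis
    unfolding chi_stable_def
  proof (intro conjI allI impI)
    have "(c * d + n) / T = n"
      using \<open>n > 0\<close> \<open>T > 0\<close> unfolding T_def n_def[symmetric] d_def[symmetric]
      by (simp add: field_simps)
    then show "(\<Sum>i\<in>insert a I. (if i = a then c / T else \<chi> i / T) * real (cdim ((W(a := U)) i))) =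
        real (cdim V)"
      using weighted_sum[of "\<lambda>X. X"] unfolding total d_def n_def by simp
  next
    fix M assume M: "csubspace M \<and> M \<subseteq> V \<and> M \<noteq> {0} \<and> M \<noteq> V"
    define m where "m = real (cdim M)"
    define k where "k = real (cdim (U \<inter> M))"
    define \<Sigma> where "\<Sigma> = (\<Sum>i\<in>I. \<chi> i * real (cdim (W i \<inter> M)))"
    have "c + \<Sigma> < m" using slack M unfolding \<Sigma>_def m_def by blast
    have "k \<le> m" "m \<le> n"
      using cdim_mono[of "U \<inter> M" M B] cdim_mono[of M V B] M V unfolding k_def m_def n_def by auto
    have "m * (n - d) \<le> n"
      using \<open>d \<ge> n - 1\<close> \<open>m \<le> n\<close> mult_left_mono[of "n - d" 1 m] unfolding m_def by auto
    then have "c * m - c \<le> c * d * m / n"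
      using \<open>n > 0\<close> \<open>0 \<le> c\<close> mult_left_mono[of "m * (n - d)" n c]
      by (simp add: field_simps)
    then have "c * k + \<Sigma> < m * T"
      using \<open>c + \<Sigma> < m\<close> \<open>k \<le> m\<close> \<open>0 \<le> c\<close> mult_left_mono[of k m c]
      unfolding T_def d_def[symmetric] n_def[symmetric] by (simp add: algebra_simps)
    then have "(c * k + \<Sigma>) / T < m"
      using \<open>T > 0\<close> by (simp add: divide_less_eq)
    then show "(\<Sum>i\<in>insert a I. (if i = a then c / T else \<chi> i / T) * real (cdim ((W(a := U)) i \<inter> M))) <
        real (cdim M)"
      using weighted_sum[of "\<lambda>X. X \<inter> M"] unfolding k_def \<Sigma>_def m_def by simp
  qed
qed

lemma finite_defects:
  fixes \<chi> :: "nat \<Rightarrow> real"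
  assumes "finite I" "V \<subseteq> cspan B" "finite B" "\<And>M. P M \<Longrightarrow> M \<subseteq> V"
  shows "finite {real (cdim M) - (\<Sum>i\<in>I. \<chi> i * real (cdim (W i \<inter> M))) | M. P M}"
proof (rule finite_subset)
  let ?n = "cdim V"
  let ?defect = "\<lambda>(m, g). real m - (\<Sum>i\<in>I. \<chi> i * real (g i))"
  show "{real (cdim M) - (\<Sum>i\<in>I. \<chi> i * real (cdim (W i \<inter> M))) | M. P M} \<subseteq>
      ?defect ` ({..?n} \<times> PiE I (\<lambda>_. {..?n}))"
  proof clarify
    fix M assume "P M"
    then have "M \<subseteq> V" using assms(4) by blast
    define g where "g = restrict (\<lambda>i. cdim (W i \<inter> M)) I"
    have "cdim M \<le> ?n" "\<forall>i. cdim (W i \<inter> M) \<le> ?n"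
      using cdim_mono[of M V B] cdim_mono[of "W _ \<inter> M" V B] \<open>M \<subseteq> V\<close> assms(2,3) by auto
    then have "(cdim M, g) \<in> {..?n} \<times> PiE I (\<lambda>_. {..?n})"
      unfolding g_def by auto
    moreover have "real (cdim M) - (\<Sum>i\<in>I. \<chi> i * real (cdim (W i \<inter> M))) = ?defect (cdim M, g)"
      unfolding g_def by (auto intro: sum.cong)
    ultimately show "real (cdim M) - (\<Sum>i\<in>I. \<chi> i * real (cdim (W i \<inter> M))) \<in>
        ?defect ` ({..?n} \<times> PiE I (\<lambda>_. {..?n}))"
      by blast
  qed
qed (use assms(1) in \<open>auto intro: finite_PiE\<close>)

lemma cdim_Cn: "cdim (Cn n) = n"
proof -
  have "{ev j | j. 1 \<le> j \<and> j \<le> n} = ev ` Suc ` {..<n}"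
    by (auto simp: image_Suc_lessThan)
  then have "Cn n = cspan (set (map (\<lambda>j. ev (Suc j)) [0..<n]))"
    unfolding Cn_def by (simp add: image_image atLeast0LessThan del: upt_Suc)
  also have "cdim \<dots> = n"
    by (subst cdim_cspan_triangular[where p = Suc]) (auto simp: ev_def simp del: upt_Suc)
  finally show ?thesis .
qed

lemma ambdim_le_cdim_Vlam: "ambdim S \<le> cdim (Vlam S l) + 1"
proof (cases S)
  case P1111
  then show ?thesis
    using cdim_cspan_triangular[of "[cv [1,l]]" "nth [1]"] by (simp add: cv_def)
next
  case P222
  then show ?thesis
    using cdim_cspan_triangular[of "[cv [1,1,1], cv [1,0,l]]" "nth [2,1]"]
    by (simp add: cv_def numeral_eq_Suc less_Suc_eq)
next
  case P133
  then show ?thesis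
    using cdim_cspan_triangular[of "[cv [1,0,0,0], cv [0,0,0,1], cv [0,1,l,0]]" "nth [1,4,2]"]
    by (simp add: cv_def numeral_eq_Suc less_Suc_eq)
next
  case P125
  then show ?thesis
    using cdim_cspan_triangular[of "[ev 1, ev 2, ev 3, ev 4, cv [0,0,0,0,1,l]]" "nth [1,2,3,4,5]"]
    by (simp add: cv_def ev_def numeral_eq_Suc less_Suc_eq)
next
  case PN4
  then show ?thesis
    using cdim_cspan_triangular[of "[cv [0,1,1,0,1], cv [1,0,1,1,0], ev 5, cv [0,0,1,l,0]]" "nth [2,1,5,3]"]
    by (simp add: cv_def ev_def numeral_eq_Suc less_Suc_eq)
qed

lemma Vamb_finite_span: "Vamb S \<subseteq> cspan {ev j | j. 1 \<le> j \<and> j \<le> ambdim S}"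
  by (simp add: Vamb_def Cn_def)

lemma Rmin_le_defect:
  assumes "csubspace M" "M \<subseteq> Vamb S" "M \<noteq> {0}" "M \<noteq> Vamb S"
  shows "Rmin S \<chi> \<le> real (cdim M) - (\<Sum>i\<in>elems_a S. \<chi> i * real (cdim (Vfix S i \<inter> M)))"
  unfolding Rmin_def
proof (rule Min_le)
  show "finite {real (cdim M) - (\<Sum>i\<in>elems_a S. \<chi> i * real (cdim (Vfix S i \<inter> M))) | M.
      csubspace M \<and> M \<subseteq> Vamb S \<and> M \<noteq> {0} \<and> M \<noteq> Vamb S}"
    by (rule finite_defects[OF _ Vamb_finite_span]) (auto simp: elems_a_def elems_def)
qed (use assms in blast)

lemma elems_eq_insert_elt_a: "elems S = insert (elt_a S) (elems_a S)"
  by (cases S) (auto simp: elems_def elems_a_def)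

lemma Vrep_eq_fun_upd: "Vrep S l = (Vfix S)(elt_a S := Vlam S l)"
  by (simp add: Vrep_def fun_eq_iff)

theorem proposition2:
  fixes S :: crit and lam :: complex and \<chi>a :: "nat \<Rightarrow> real" and \<epsilon> :: real
  assumes pos: "\<forall>i\<in>elems_a S. 0 < \<chi>a i"
    and stab: "chi_stable (Vamb S) (elems_a S) (Vfix S) \<chi>a"
    and eps: "0 < \<epsilon>" "\<epsilon> < Rmin S \<chi>a"
  shows "let R = Rmin S \<chi>a;
             T = 1 + (R - \<epsilon>) * real (cdim (Vlam S lam)) / real (cdim (Vamb S));
             \<chi>S = (\<lambda>i. if i = elt_a S then (R - \<epsilon>) / T else \<chi>a i / T)
         in chi_stable (Vamb S) (elems S) (Vrep S lam) \<chi>S"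
proof -
  have dim_Vamb: "cdim (Vamb S) = ambdim S"
    unfolding Vamb_def by (rule cdim_Cn)
  show ?thesis
    unfolding Let_def elems_eq_insert_elt_a Vrep_eq_fun_upd
  proof (rule chi_stable_adjoin[OF _ _ Vamb_finite_span])
    show "0 < cdim (Vamb S)" "cdim (Vamb S) \<le> cdim (Vlam S lam) + 1"
      unfolding dim_Vamb using ambdim_le_cdim_Vlam[of S lam] by (cases S; simp)+
    show "(\<Sum>i\<in>elems_a S. \<chi>a i * real (cdim (Vfix S i))) = real (cdim (Vamb S))"
      using stab unfolding chi_stable_def by blast
    show "Rmin S \<chi>a - \<epsilon> + (\<Sum>i\<in>elems_a S. \<chi>a i * real (cdim (Vfix S i \<inter> M))) < real (cdim M)"
      if "csubspace M" "M \<subseteq> Vamb S" "M \<noteq> {0}" "M \<noteq> Vamb S" for M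
      using Rmin_le_defect[OF that, of \<chi>a] \<open>0 < \<epsilon>\<close> by linarith
  qed (use eps in \<open>auto simp: elems_a_def elems_def\<close>)
qed

end
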